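(* Let $m\ge 1$, $q=2^m$, and let $n$ be odd. Let \[L(x)=\sum_{i=0}^{m-1}L_i\big(x^{2^i}\big),\] where each $L_i$ is a $q$-linear polynomial over $\mathbb F_{q^n}$. Then $\mathrm{Tr}(x^{q+1})+L(x)$ is a permutation polynomial of $\mathbb F_{q^n}$ if and only if all three of the following hold: $L_i(1)\in\mathbb F_q$ for $0\le i<m$; the polynomial \[\ell(x)=\sum_{i=0}^{m-1}(L_i(1)x)^{2^{m-i}}+x^{2^{m-1}}\] is a permutation polynomial of $\mathbb F_q$; and $\ker\mathrm{Tr}\cap\ker L^\prime=\{0\}$.
   Context: $\mathrm{Tr}$ denotes the trace map of $\mathbb F_{q^n}$ over $\mathbb F_q$, $\mathrm{Tr}(x)=\sum_{j=0}^{n-1}x^{q^j}$. Polynomials are regarded as maps on $\mathbb F_{q^n}$. A $q$-linear polynomial over $\mathbb F_{q^n}$ is one of the form $\sum_{j=0}^{n-1}a_jx^{q^j}$ with $a_j\in\mathbb F_{q^n}$; a $2$-linear polynomial is one of the form $\sum_{j=0}^{mn-1}a_jx^{2^j}$. For a $2$-linear polynomial $L(x)=\sum_{j=0}^{mn-1}a_jx^{2^j}$, its adjoint is $L^\prime(x)=\sum_{j=0}^{mn-1}(a_jx)^{2^{-j}}$, where $y\mapsto y^{2^{-j}}$ denotes the inverse of the automorphism $y\mapsto y^{2^j}$ of $\mathbb F_{q^n}$; equivalently $L'$ is the unique map with $\mathrm{T}(\alpha L(\beta))=\mathrm{T}(L^\prime(\alpha)\beta)$ for all $\alpha,\beta\in\mathbb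 F_{q^n}$, where $\mathrm T$ is the absolute trace of $\mathbb F_{q^n}$ over $\mathbb F_2$. $\ker$ denotes the kernel of an additive map on $\mathbb F_{q^n}$. *)

theory Defs
  imports Main
begin

definition rel_trace :: "nat \<Rightarrow> nat \<Rightarrow> 'a::field \<Rightarrow> 'a" where
  "rel_trace q n x = (\<Sum>j<n. x ^ (q ^ j))"

definition qlin :: "nat \<Rightarrow> nat \<Rightarrow> (nat \<Rightarrow> 'a::field) \<Rightarrow> 'a \<Rightarrow> 'a" where
  "qlin q n c x = (\<Sum>j<n. c j * x ^ (q ^ j))"

definition Lpoly :: "nat \<Rightarrow> nat \<Rightarrow> (nat \<Rightarrow> nat \<Rightarrow> 'a::field) \<Rightarrow> 'a \<Rightarrow> 'a" where
  "Lpoly m n a x = (\<Sum>i<m. qlin (2 ^ m) n (a i) (x ^ (2 ^ i)))"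

text \<open>Adjoint of L. As a 2-linear polynomial, L(x) = sum_{i<m, j<n} a i j x^(2^(i+m j)),
  so L'(y) = sum (a i j * y)^(2^(-(i+m j))), and the inverse of y \<mapsto> y^(2^k) on
  GF(2^(mn)) (k < mn) is y \<mapsto> y^(2^(mn-k)).\<close>
definition Ladj :: "nat \<Rightarrow> nat \<Rightarrow> (nat \<Rightarrow> nat \<Rightarrow> 'a::field) \<Rightarrow> 'a \<Rightarrow> 'a" where
  "Ladj m n a y = (\<Sum>i<m. \<Sum>j<n. (a i j * y) ^ (2 ^ (m * n - (i + m * j))))"

definition subfield_q :: "nat \<Rightarrow> 'a::field set" where
  "subfield_q q = {x. x ^ q = x}"

end

theory Submission
  imports
    Defs
    "HOL-Computational_Algebra.Polynomial"
    "HOL-Library.Set_Algebras"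
    "HOL-Library.Product_Plus"
begin

text \<open>
  Write \<open>q = 2 ^ m\<close>, \<open>F\<close> for the subfield with \<open>q\<close> elements and
  \<open>f x = Tr (x ^ (q + 1)) + L x\<close>. In characteristic 2,
  \<open>f (x + b) = f x + Tr (x ^ q * b + x * b ^ q) + f b\<close>, so \<open>f\<close> is a permutation iff
  this difference never vanishes for \<open>b \<noteq> 0\<close>. For \<open>b \<in> F\<close> the middle term is \<open>0\<close> and
  \<open>f b = b\<^sup>2 + L b\<close>, because \<open>Tr\<close> is the identity on \<open>F\<close> for odd \<open>n\<close>. For \<open>b \<notin> F\<close> the
  middle term is \<open>Tr (c * x)\<close> with \<open>c = b ^ q ^ (n - 1) + b ^ q\<close>, nonzero again since \<open>n\<close> is
  odd, and it takes every value in \<open>F\<close>. Hence \<open>f\<close> is a permutation iff (A) \<open>g b = b\<^sup>2 + L b\<close>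
  is injective on \<open>F\<close> and (B) \<open>L -` F \<subseteq> F\<close>.

  Both conditions are translated by duality for the pairing \<open>T (x * y)\<close>, \<open>T\<close> the absolute
  trace; a character sum shows \<open>card U * card U\<^sup>\<bottom> = card V\<close> for additive subgroups
  \<open>U \<subseteq> V\<close>. The annihilator of \<open>range L + F\<close> is \<open>ker Tr \<inter> ker L'\<close>, and
  \<open>card (L -` F) * card (range L + F) = q ^ n * q\<close>. So \<open>card (L -` F) \<ge> q\<close> always, and (B)
  holds iff \<open>L -` F = F\<close>, i.e. iff \<open>L\<close> maps \<open>F\<close> into \<open>F\<close> (equivalently every
  \<open>L\<^sub>i 1 \<in> F\<close>, by a degree argument) and \<open>ker Tr \<inter> ker L' = 0\<close>. Finally \<open>\<ell>\<close> is the
  adjoint of \<open>g\<close> on \<open>F\<close>, and adjoint additive maps have kernels of the same size, so (A)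
  holds iff \<open>\<ell>\<close> permutes \<open>F\<close>.
\<close>

definition add_subgroup :: "'a::ab_group_add set \<Rightarrow> bool" where
  "add_subgroup V \<longleftrightarrow> 0 \<in> V \<and> (\<forall>x\<in>V. \<forall>y\<in>V. x + y \<in> V) \<and> (\<forall>x\<in>V. - x \<in> V)"

definition additive_on :: "'a::ab_group_add set \<Rightarrow> ('a \<Rightarrow> 'b::ab_group_add) \<Rightarrow> bool" where
  "additive_on V h \<longleftrightarrow> (\<forall>x\<in>V. \<forall>y\<in>V. h (x + y) = h x + h y)"

lemma add_subgroupD:
  assumes "add_subgroup V"
  shows add_subgroup_zero: "0 \<in> V"
    and add_subgroup_add: "x \<in> V \<Longrightarrow> y \<in> V \<Longrightarrow> x + y \<in> V"
    and add_subgroup_uminus: "x \<in> V \<Longrightarrow> - x \<in> V"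
  using assms unfolding add_subgroup_def by auto

lemma add_subgroup_diff: "add_subgroup V \<Longrightarrow> x \<in> V \<Longrightarrow> y \<in> V \<Longrightarrow> x - y \<in> V"
  by (metis add_subgroup_add add_subgroup_uminus diff_conv_add_uminus)

lemma add_subgroup_UNIV: "add_subgroup UNIV"
  by (simp add: add_subgroup_def)

lemma add_subgroup_Times:
  assumes "add_subgroup A" "add_subgroup B"
  shows "add_subgroup (A \<times> B)"
  unfolding add_subgroup_def
proof (intro conjI ballI)
  show "0 \<in> A \<times> B"
    using assms by (simp add: zero_prod_def add_subgroup_zero)
next
  fix p p' assume "p \<in> A \<times> B" "p' \<in> A \<times> B"
  then show "p + p' \<in> A \<times> B"
    using assms by (cases p, cases p') (simp add: add_subgroup_add)
next
  fix p assume "p \<in> A \<times> B"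
  then show "- p \<in> A \<times> B"
    using assms by (cases p) (simp add: add_subgroup_uminus)
qed

lemma additive_on_zero: "additive_on V h \<Longrightarrow> 0 \<in> V \<Longrightarrow> h 0 = 0"
  unfolding additive_on_def by (metis add.right_neutral add_left_imp_eq)

lemma additive_on_diff:
  assumes "additive_on V h" "add_subgroup V" "x \<in> V" "y \<in> V"
  shows "h (x - y) = h x - h y"
proof -
  have "h (x - y + y) = h (x - y) + h y"
    using assms add_subgroup_diff unfolding additive_on_def by blast
  then show ?thesis by simp
qed

lemma add_subgroup_image:
  assumes V: "add_subgroup V" and h: "additive_on V h"
  shows "add_subgroup (h ` V)"
  unfolding add_subgroup_def
proof (intro conjI ballI)
  show "0 \<in> h ` V"
    using additive_on_zero[OF h] add_subgroup_zero[OF V] by (metis image_eqI)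
next
  fix x y assume "x \<in> h ` V" "y \<in> h ` V"
  then obtain u v where uv: "u \<in> V" "v \<in> V" "x = h u" "y = h v" by auto
  then have "x + y = h (u + v)"
    using h by (simp add: additive_on_def)
  then show "x + y \<in> h ` V"
    using add_subgroup_add[OF V uv(1,2)] by simp
next
  fix x assume "x \<in> h ` V"
  then obtain u where u: "u \<in> V" "x = h u" by auto
  have "h (0 - u) = h 0 - h u"
    using additive_on_diff[OF h V _ u(1)] add_subgroup_zero[OF V] by blast
  then have "- x = h (- u)"
    using u additive_on_zero[OF h add_subgroup_zero[OF V]] by simp
  then show "- x \<in> h ` V"
    using add_subgroup_uminus[OF V u(1)] by simp
qed

lemma add_subgroup_set_plus:
  assumes A: "add_subgroup A" and B: "add_subgroup B"
  shows "add_subgroup (A + B)"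
  unfolding add_subgroup_def
proof (intro conjI ballI)
  show "0 \<in> A + B"
    using set_plus_intro[OF add_subgroup_zero[OF A] add_subgroup_zero[OF B]] by simp
next
  fix x y assume "x \<in> A + B" "y \<in> A + B"
  then obtain a b a' b' where ab: "a \<in> A" "b \<in> B" "a' \<in> A" "b' \<in> B" "x = a + b" "y = a' + b'"
    by (metis set_plus_elim)
  have "(a + a') + (b + b') \<in> A + B"
    using ab add_subgroup_add[OF A] add_subgroup_add[OF B] by (intro set_plus_intro)
  moreover have "x + y = (a + a') + (b + b')"
    using ab by (simp add: ac_simps)
  ultimately show "x + y \<in> A + B"
    by simp
next
  fix x assume "x \<in> A + B"
  then obtain a b where ab: "a \<in> A" "b \<in> B" "x = a + b"
    by (metis set_plus_elim)
  have "- a + - b \<in> A + B"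
    using ab add_subgroup_uminus[OF A] add_subgroup_uminus[OF B] by (intro set_plus_intro)
  moreover have "- x = - a + - b"
    using ab by simp
  ultimately show "- x \<in> A + B"
    by simp
qed

lemma card_eq_card_image_mult_card_fibre:
  assumes "finite D" "\<And>y. y \<in> h ` D \<Longrightarrow> card {x \<in> D. h x = y} = k"
  shows "card D = card (h ` D) * k"
proof -
  have "card D = (\<Sum>x\<in>D. 1)"
    by simp
  also have "\<dots> = (\<Sum>y\<in>h ` D. \<Sum>x\<in>{x \<in> D. h x = y}. 1)"
    by (rule sum.group[symmetric]) (use assms in auto)
  also have "\<dots> = (\<Sum>y\<in>h ` D. k)"
    by (rule sum.cong) (use assms in auto)
  finally show ?thesis by simp
qed

text \<open>Every fibre of an additive map is a translate of its kernel.\<close>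
lemma card_eq_card_image_mult_card_kernel:
  assumes V: "add_subgroup V" "finite V" and h: "additive_on V h"
  shows "card V = card (h ` V) * card {x \<in> V. h x = 0}"
proof (rule card_eq_card_image_mult_card_fibre[OF V(2)])
  fix y assume "y \<in> h ` V"
  then obtain x0 where x0: "x0 \<in> V" "y = h x0" by auto
  have "{x \<in> V. h x = y} = (\<lambda>x. x + x0) ` {x \<in> V. h x = 0}"
  proof (intro set_eqI iffI)
    fix x assume x: "x \<in> {x \<in> V. h x = y}"
    then have "x - x0 \<in> {x \<in> V. h x = 0}"
      using x0 add_subgroup_diff[OF V(1)] additive_on_diff[OF h V(1)] by auto
    then show "x \<in> (\<lambda>x. x + x0) ` {x \<in> V. h x = 0}"
      by (rule rev_image_eqI) simp
  next
    fix x assume "x \<in> (\<lambda>x. x + x0) ` {x \<in> V. h x = 0}"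
    then show "x \<in> {x \<in> V. h x = y}"
      using x0 h add_subgroup_add[OF V(1)] unfolding additive_on_def by auto
  qed
  then show "card {x \<in> V. h x = y} = card {x \<in> V. h x = 0}"
    by (simp add: card_image)
qed

lemma card_inter_mult_card_set_plus:
  fixes A B :: "'a::ab_group_add set"
  assumes A: "add_subgroup A" "finite A" and B: "add_subgroup B" "finite B"
  shows "card (A \<inter> B) * card (A + B) = card A * card B"
proof -
  let ?s = "\<lambda>(x, y). x + y :: 'a"
  have kernel: "{p \<in> A \<times> B. ?s p = 0} = (\<lambda>w. (w, - w)) ` (A \<inter> B)"
  proof (intro set_eqI iffI)
    fix p assume "p \<in> {p \<in> A \<times> B. ?s p = 0}"
    then obtain x y where p: "p = (x, y)" "x \<in> A" "y \<in> B" "y = - x"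
      by (auto simp: add_eq_0_iff)
    then have "x \<in> B" using add_subgroup_uminus[OF B(1)] by force
    then show "p \<in> (\<lambda>w. (w, - w)) ` (A \<inter> B)" using p by auto
  next
    fix p assume "p \<in> (\<lambda>w. (w, - w)) ` (A \<inter> B)"
    then show "p \<in> {p \<in> A \<times> B. ?s p = 0}"
      using add_subgroup_uminus[OF B(1)] by auto
  qed
  have "card (A \<times> B) = card (?s ` (A \<times> B)) * card {p \<in> A \<times> B. ?s p = 0}"
    by (rule card_eq_card_image_mult_card_kernel)
       (use A B add_subgroup_Times in \<open>auto simp: additive_on_def\<close>)
  also have "card {p \<in> A \<times> B. ?s p = 0} = card (A \<inter> B)"
    unfolding kernel by (rule card_image) (auto intro: inj_onI)
  finally show ?thesis
    by (simp add: set_plus_image card_cartesian_product)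
qed

lemma additive_inj_on_iff:
  assumes V: "add_subgroup V" and h: "additive_on V h"
  shows "inj_on h V \<longleftrightarrow> {x \<in> V. h x = 0} = {0}"
proof
  assume "inj_on h V"
  then show "{x \<in> V. h x = 0} = {0}"
    using additive_on_zero[OF h] add_subgroup_zero[OF V]
    by (auto dest: inj_onD[of h V _ 0] simp del: ex_in_conv)
next
  assume ker: "{x \<in> V. h x = 0} = {0}"
  show "inj_on h V"
  proof (rule inj_onI)
    fix x y assume "x \<in> V" "y \<in> V" "h x = h y"
    then have "x - y \<in> {x \<in> V. h x = 0}"
      using additive_on_diff[OF h V] add_subgroup_diff[OF V] by simp
    then show "x = y" using ker by simp
  qed
qed

lemma bij_iff_translation_changes_value:
  fixes h :: "'a::{finite,ab_group_add} \<Rightarrow> 'a"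
  shows "bij h \<longleftrightarrow> (\<forall>b x. b \<noteq> 0 \<longrightarrow> h (x + b) \<noteq> h x)"
proof -
  have "bij h \<longleftrightarrow> inj h"
    unfolding bij_def using finite_UNIV_inj_surj[of h] finite_UNIV by blast
  also have "\<dots> \<longleftrightarrow> (\<forall>b x. b \<noteq> 0 \<longrightarrow> h (x + b) \<noteq> h x)"
  proof
    assume "inj h"
    then show "\<forall>b x. b \<noteq> 0 \<longrightarrow> h (x + b) \<noteq> h x"
      by (metis add_cancel_left_right injD)
  next
    assume shift: "\<forall>b x. b \<noteq> 0 \<longrightarrow> h (x + b) \<noteq> h x"
    show "inj h"
    proof (rule injI)
      fix x y assume "h x = h y"
      then have "h (x + (y - x)) = h x"
        by simp
      then have "y - x = 0"
        using shift by blast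
      then show "x = y"
        by simp
    qed
  qed
  finally show ?thesis .
qed

lemma eq_singleton_iff_card_eq_1:
  assumes "a \<in> A"
  shows "A = {a} \<longleftrightarrow> card A = 1"
proof
  assume "card A = 1"
  then obtain z where "A = {z}"
    by (rule card_1_singletonE)
  with assms show "A = {a}"
    by simp
qed simp

lemma sum_eq_0_if_translation_negates:
  fixes \<phi> :: "'a::ab_group_add \<Rightarrow> 'b::linordered_ab_group_add"
  assumes W: "add_subgroup W" and "w0 \<in> W"
    and negates: "\<And>w. w \<in> W \<Longrightarrow> \<phi> (w + w0) = - \<phi> w"
  shows "sum \<phi> W = 0"
proof -
  have "sum \<phi> W = sum (\<lambda>w. \<phi> (w + w0)) W"
    by (rule sum.reindex_bij_witness[of _ "\<lambda>w. w + w0" "\<lambda>w. w - w0"])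
       (use \<open>w0 \<in> W\<close> add_subgroup_add[OF W] add_subgroup_diff[OF W] in auto)
  also have "\<dots> = - sum \<phi> W"
    using negates by (simp add: sum_negf)
  finally show ?thesis by simp
qed

lemma card_roots_sparse_poly_le:
  fixes d :: "nat \<Rightarrow> 'a::field" and e :: "nat \<Rightarrow> nat"
  assumes "inj_on e {..<k}" "i0 < k" "d i0 \<noteq> 0" "\<And>i. i < k \<Longrightarrow> e i \<le> D"
  shows "card {x. (\<Sum>i<k. d i * x ^ e i) = 0} \<le> D"
proof -
  define p where "p = (\<Sum>i<k. monom (d i) (e i))"
  have eval: "poly p x = (\<Sum>i<k. d i * x ^ e i)" for x
    unfolding p_def by (simp add: poly_sum poly_monom)
  have "coeff p (e i0) = d i0"
    unfolding p_def coeff_sum coeff_monom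
    using assms(1,2) by (simp add: inj_on_eq_iff sum.delta' cong: if_cong)
  then have "p \<noteq> 0" using assms(3) by auto
  moreover have "degree p \<le> D"
    unfolding p_def by (rule degree_sum_le) (auto intro: order.trans[OF degree_monom_le] assms(4))
  ultimately show ?thesis
    using card_poly_roots_bound[of p] eval by simp
qed

lemma sum_lessThan_rotate:
  fixes g :: "nat \<Rightarrow> 'a::cancel_comm_monoid_add"
  assumes "g n = g 0"
  shows "(\<Sum>j<n. g (Suc j)) = (\<Sum>j<n. g j)"
proof -
  have "g 0 + (\<Sum>j<n. g (Suc j)) = (\<Sum>j<Suc n. g j)"
    by (rule sum.lessThan_Suc_shift[symmetric])
  also have "\<dots> = g 0 + (\<Sum>j<n. g j)"
    using assms by (simp add: add.commute)
  finally show ?thesis by simp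
qed

lemma finite_field_power_card:
  fixes x :: "'a::{finite,field}"
  shows "x ^ card (UNIV :: 'a set) = x"
proof (cases "x = 0")
  case False
  let ?U = "UNIV - {0::'a}"
  have "x ^ card ?U * prod id ?U = prod (\<lambda>y. x * y) ?U"
    by (simp add: prod.distrib)
  also have "\<dots> = prod id ?U"
    by (rule prod.reindex_bij_witness[of _ "\<lambda>y. y / x" "\<lambda>y. x * y"]) (use False in auto)
  finally have "x ^ card ?U = 1"
    by (simp add: prod_zero_iff)
  moreover have "card (UNIV :: 'a set) = Suc (card ?U)"
    using finite_UNIV_card_ge_0[where 'a='a] by (simp add: card_Diff_singleton)
  ultimately show ?thesis
    by (metis power_Suc mult.right_neutral)
qed (simp add: finite_UNIV_card_ge_0)

context
  assumes char2: "CHAR('a::comm_ring_1) = 2"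
begin

lemma char2_add_self: "x + x = (0::'a)"
proof -
  have "x + x = of_nat CHAR('a) * x"
    by (simp add: char2 algebra_simps)
  then show ?thesis by simp
qed

lemma char2_uminus: "- x = (x::'a)"
  using char2_add_self by (simp add: add_eq_0_iff2)

lemma char2_diff: "x - y = x + (y::'a)"
  by (simp only: diff_conv_add_uminus char2_uminus)

lemma char2_add_eq_0_iff: "x + y = 0 \<longleftrightarrow> x = (y::'a)"
  by (metis add_eq_0_iff2 char2_uminus)

lemma char2_power_add: "(x + y) ^ 2 ^ k = x ^ 2 ^ k + (y::'a) ^ 2 ^ k"
  by (rule freshmans_dream') (simp_all add: char2)

lemma char2_power_sum: "sum f A ^ 2 ^ k = (\<Sum>i\<in>A. (f i :: 'a) ^ 2 ^ k)"
  by (rule freshmans_dream_sum') (simp_all add: char2)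

end

definition abs_trace :: "nat \<Rightarrow> 'a::comm_ring_1 \<Rightarrow> 'a" where
  "abs_trace k x = (\<Sum>i<k. x ^ 2 ^ i)"

context
  fixes k :: nat
  assumes card: "card (UNIV :: 'a::{finite,field} set) = 2 ^ k"
begin

lemma card_exponent_nonzero: "k \<noteq> 0"
proof
  assume "k = 0"
  moreover have "card {0, 1::'a} \<le> card (UNIV :: 'a set)"
    by (rule card_mono) auto
  ultimately show False using card by simp
qed

lemma CHAR_eq_2: "CHAR('a) = 2"
proof -
  have "(- 1::'a) ^ card (UNIV :: 'a set) = 1"
    using card card_exponent_nonzero by simp
  then have "of_nat 2 = (0::'a)"
    using finite_field_power_card[of "- 1 :: 'a"] by simp
  then have "CHAR('a) dvd 2"
    by (simp only: of_nat_eq_0_iff_char_dvd)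
  moreover have "CHAR('a) \<noteq> 1"
    by simp
  ultimately show ?thesis
    using dvd_imp_le[of "CHAR('a)" 2] by (cases "CHAR('a)") (auto simp: dvd_def)
qed

lemma power_two_power_card: "(x::'a) ^ 2 ^ k = x"
  using finite_field_power_card[of x] card by simp

lemma abs_trace_add: "abs_trace k (x + y) = abs_trace k x + abs_trace k (y::'a)"
  unfolding abs_trace_def by (simp add: char2_power_add CHAR_eq_2 sum.distrib)

lemma abs_trace_square: "abs_trace k (x\<^sup>2) = abs_trace k (x::'a)"
proof -
  have "abs_trace k (x\<^sup>2) = (\<Sum>i<k. x ^ 2 ^ Suc i)"
    unfolding abs_trace_def by (simp add: power_mult[symmetric] mult.commute)
  also have "\<dots> = abs_trace k x"
    unfolding abs_trace_def by (rule sum_lessThan_rotate) (simp add: power_two_power_card)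
  finally show ?thesis .
qed

lemma abs_trace_power_two_power: "abs_trace k (x ^ 2 ^ j) = abs_trace k (x::'a)"
proof (induction j)
  case (Suc j)
  then show ?case
    using abs_trace_square[of "x ^ 2 ^ j"] by (simp add: power_mult[symmetric] mult.commute)
qed simp

lemma abs_trace_eq_0_or_1: "abs_trace k (x::'a) = 0 \<or> abs_trace k x = 1"
proof -
  have "(abs_trace k x)\<^sup>2 = (\<Sum>i<k. (x ^ 2 ^ i)\<^sup>2)"
    unfolding abs_trace_def using char2_power_sum[OF CHAR_eq_2, of "\<lambda>i. x ^ 2 ^ i" _ 1] by simp
  also have "\<dots> = abs_trace k (x\<^sup>2)"
    unfolding abs_trace_def by (simp add: power_mult[symmetric] mult.commute)
  finally have "(abs_trace k x)\<^sup>2 = abs_trace k x"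
    by (simp only: abs_trace_square)
  then show ?thesis
    by (simp add: power2_eq_square)
qed

lemma abs_trace_mult_power_shift:
  assumes "x ^ 2 ^ l = x" "e \<le> l"
  shows "abs_trace k (w ^ 2 ^ (l - e) * x) = abs_trace k (w * (x::'a) ^ 2 ^ e)"
proof -
  have "abs_trace k (w * x ^ 2 ^ e) = abs_trace k ((w * x ^ 2 ^ e) ^ 2 ^ (l - e))"
    by (simp add: abs_trace_power_two_power)
  also have "(w * x ^ 2 ^ e) ^ 2 ^ (l - e) = w ^ 2 ^ (l - e) * x ^ 2 ^ l"
    using assms(2) by (simp add: power_mult_distrib power_mult[symmetric] power_add[symmetric])
  finally show ?thesis
    using assms(1) by simp
qed

lemma abs_trace_nonzero: "\<exists>x::'a. abs_trace k x \<noteq> 0"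
proof (rule ccontr)
  assume "\<not> (\<exists>x::'a. abs_trace k x \<noteq> 0)"
  then have "{x::'a. (\<Sum>i<k. 1 * x ^ 2 ^ i) = 0} = UNIV"
    by (auto simp: abs_trace_def)
  moreover have "card {x::'a. (\<Sum>i<k. 1 * x ^ 2 ^ i) = 0} \<le> 2 ^ (k - 1)"
  proof (rule card_roots_sparse_poly_le)
    show "inj_on (\<lambda>i. (2::nat) ^ i) {..<k}"
      by (auto simp: inj_on_def)
    show "0 < k"
      using card_exponent_nonzero by simp
    show "(2::nat) ^ i \<le> 2 ^ (k - 1)" if "i < k" for i
      by (rule power_increasing) (use that in auto)
  qed simp
  ultimately show False
    using card card_exponent_nonzero by simp
qed

end

locale binary_functional =
  fixes T :: "'a::{finite,field} \<Rightarrow> 'a"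
  assumes add: "T (x + y) = T x + T y"
    and eq_0_or_1: "T x = 0 \<or> T x = 1"
    and two_eq_zero: "(2::'a) = 0"
begin

lemma zero [simp]: "T 0 = 0"
  using add[of 0 0] by (simp only: add_0 add_cancel_right_right)

lemma sum: "T (sum f A) = (\<Sum>i\<in>A. T (f i))"
  by (induction A rule: infinite_finite_induct) (simp_all add: add)

definition character :: "'a \<Rightarrow> int" where
  "character z = (if T z = 0 then 1 else - 1)"

definition annihilator :: "'a set \<Rightarrow> 'a set \<Rightarrow> 'a set" where
  "annihilator V U = {y \<in> V. \<forall>u\<in>U. T (y * u) = 0}"

definition nondegenerate_on :: "'a set \<Rightarrow> bool" where
  "nondegenerate_on V \<longleftrightarrow> (\<forall>u\<in>V. u \<noteq> 0 \<longrightarrow> (\<exists>y\<in>V. T (y * u) \<noteq> 0))"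

lemma character_add_one: "T w = 1 \<Longrightarrow> character (z + w) = - character z"
  using eq_0_or_1[of z] by (auto simp: character_def add two_eq_zero)

lemma sum_character:
  assumes U: "add_subgroup U"
  shows "(\<Sum>u\<in>U. character (y * u)) = (if \<forall>u\<in>U. T (y * u) = 0 then int (card U) else 0)"
proof (cases "\<forall>u\<in>U. T (y * u) = 0")
  case True
  then show ?thesis by (simp add: character_def)
next
  case False
  then obtain u0 where u0: "u0 \<in> U" "T (y * u0) = 1"
    using eq_0_or_1 by blast
  have "(\<Sum>u\<in>U. character (y * u)) = 0"
    by (rule sum_eq_0_if_translation_negates[OF U u0(1)]) (simp add: distrib_left character_add_one u0(2))
  then show ?thesis
    using False by (simp only: if_False)
qed

text \<open>Double counting of \<open>\<Sum>y\<in>V. \<Sum>u\<in>U. character (y * u)\<close>.\<close>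
lemma card_mult_card_annihilator:
  assumes V: "add_subgroup V" "nondegenerate_on V" and U: "add_subgroup U" "U \<subseteq> V"
  shows "card U * card (annihilator V U) = card V"
proof -
  have "(\<Sum>y\<in>annihilator V U. int (card U)) = (\<Sum>y\<in>V \<inter> annihilator V U. int (card U))"
    by (simp add: annihilator_def Int_absorb1)
  also have "\<dots> = (\<Sum>y\<in>V. if y \<in> annihilator V U then int (card U) else 0)"
    by (rule sum.inter_restrict) simp
  also have "\<dots> = (\<Sum>y\<in>V. \<Sum>u\<in>U. character (y * u))"
    by (rule sum.cong) (simp_all add: sum_character[OF U(1)] annihilator_def)
  also have "\<dots> = (\<Sum>u\<in>U. \<Sum>y\<in>V. character (u * y))"
    by (subst sum.swap) (simp add: mult.commute)
  also have "\<dots> = (\<Sum>u\<in>U. if u = 0 then int (card V) else 0)"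
  proof (rule sum.cong)
    fix u assume "u \<in> U"
    then have "u \<noteq> 0 \<Longrightarrow> \<exists>y\<in>V. T (u * y) \<noteq> 0"
      using V(2) U(2) unfolding nondegenerate_on_def by (metis mult.commute subsetD)
    then show "(\<Sum>y\<in>V. character (u * y)) = (if u = 0 then int (card V) else 0)"
      by (auto simp: sum_character[OF V(1)])
  qed simp
  also have "\<dots> = int (card V)"
    using add_subgroup_zero[OF U(1)] by (simp add: sum.delta)
  finally have "int (card (annihilator V U) * card U) = int (card V)"
    by simp
  then show ?thesis
    by (metis mult.commute of_nat_eq_iff)
qed

lemma nondegenerate_onI:
  assumes "z \<in> V" "T z \<noteq> 0" and closed: "\<And>x y. x \<in> V \<Longrightarrow> y \<in> V \<Longrightarrow> x / y \<in> V"
  shows "nondegenerate_on V"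
  unfolding nondegenerate_on_def
proof (intro ballI impI)
  fix u assume "u \<in> V" "u \<noteq> 0"
  then have "z / u \<in> V" "T (z / u * u) \<noteq> 0"
    using assms by simp_all
  then show "\<exists>y\<in>V. T (y * u) \<noteq> 0" by blast
qed

text \<open>The kernel of \<open>B\<close> is the annihilator of the image of \<open>A\<close>.\<close>
lemma card_kernel_eq_card_kernel_adjoint:
  assumes V: "add_subgroup V" "nondegenerate_on V"
    and A: "additive_on V A" "\<And>x. x \<in> V \<Longrightarrow> A x \<in> V"
    and B: "\<And>y. y \<in> V \<Longrightarrow> B y \<in> V"
    and adjoint: "\<And>x y. x \<in> V \<Longrightarrow> y \<in> V \<Longrightarrow> T (y * A x) = T (B y * x)"
  shows "card {x \<in> V. A x = 0} = card {y \<in> V. B y = 0}"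
proof -
  have "{y \<in> V. B y = 0} = annihilator V (A ` V)"
  proof (intro set_eqI iffI)
    fix y assume y: "y \<in> annihilator V (A ` V)"
    then have yV: "y \<in> V"
      by (simp add: annihilator_def)
    have "T (x * B y) = 0" if "x \<in> V" for x
    proof -
      have "T (x * B y) = T (y * A x)"
        using adjoint[OF that yV] by (simp only: mult.commute[of x])
      then show ?thesis
        using y that by (simp add: annihilator_def)
    qed
    then show "y \<in> {y \<in> V. B y = 0}"
      using V(2) B[OF yV] yV unfolding nondegenerate_on_def by blast
  qed (auto simp: annihilator_def adjoint)
  moreover have "card (A ` V) * card (annihilator V (A ` V)) = card V"
    using card_mult_card_annihilator[OF V add_subgroup_image[OF V(1) A(1)]] A(2) by auto
  moreover have "card V = card (A ` V) * card {x \<in> V. A x = 0}"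
    using card_eq_card_image_mult_card_kernel[OF V(1) _ A(1)] by simp
  moreover have "card (A ` V) \<noteq> 0"
    using add_subgroup_zero[OF V(1)] by auto
  ultimately show ?thesis
    by (metis mult_left_cancel)
qed

end

lemma binary_functional_abs_trace:
  assumes "card (UNIV :: 'a::{finite,field} set) = 2 ^ k"
  shows "binary_functional (abs_trace k :: 'a \<Rightarrow> 'a)"
proof
  show "abs_trace k (x + y) = abs_trace k x + abs_trace k (y::'a)" for x y
    by (rule abs_trace_add[OF assms])
  show "abs_trace k (x::'a) = 0 \<or> abs_trace k x = 1" for x
    by (rule abs_trace_eq_0_or_1[OF assms])
  show "(2::'a) = 0"
    using of_nat_CHAR[where 'a='a] by (simp add: CHAR_eq_2[OF assms])
qed

lemma power_two_power_power_two_power: "(x ^ 2 ^ i) ^ 2 ^ j = (x::'a::monoid_mult) ^ 2 ^ (i + j)"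
  by (simp add: power_mult[symmetric] power_add)

locale binary_odd_extension =
  fixes m n :: nat and a :: "nat \<Rightarrow> nat \<Rightarrow> 'a::{finite,field}"
  assumes m_pos: "m \<ge> 1" and odd_n: "odd n" and card: "card (UNIV :: 'a set) = 2 ^ (m * n)"
begin

sublocale T: binary_functional "abs_trace (m * n) :: 'a \<Rightarrow> 'a"
  by (rule binary_functional_abs_trace[OF card])

abbreviation T :: "'a \<Rightarrow> 'a" where "T \<equiv> abs_trace (m * n)"
abbreviation Tr :: "'a \<Rightarrow> 'a" where "Tr \<equiv> rel_trace (2 ^ m) n"
abbreviation F :: "'a set" where "F \<equiv> subfield_q (2 ^ m)"

lemma char_2: "CHAR('a) = 2"
  by (rule CHAR_eq_2[OF card])

lemmas char2_simps [simp] = char2_uminus[OF char_2] char2_diff[OF char_2] char2_add_self[OF char_2]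

lemma power_two_power_add: "(x + y) ^ 2 ^ k = x ^ 2 ^ k + (y::'a) ^ 2 ^ k"
  by (rule char2_power_add[OF char_2])

lemma power_two_power_sum: "sum f A ^ 2 ^ k = (\<Sum>i\<in>A. (f i :: 'a) ^ 2 ^ k)"
  by (rule char2_power_sum[OF char_2])

lemma q_power: "((2::nat) ^ m) ^ j = 2 ^ (m * j)"
  by (simp add: power_mult)

lemma power_q_power_n: "(x::'a) ^ (2 ^ m) ^ n = x"
  by (simp add: q_power power_two_power_card[OF card])

lemma one_less_q: "Suc 0 < 2 ^ m"
  using power_increasing[of 1 m "2::nat"] m_pos by simp

lemma subfield_iff: "x \<in> F \<longleftrightarrow> x ^ 2 ^ m = x"
  by (simp add: subfield_q_def)

lemma subfield_zero [simp]: "0 \<in> F"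
  using m_pos by (simp add: subfield_iff)

lemma subfield_add: "x \<in> F \<Longrightarrow> y \<in> F \<Longrightarrow> x + y \<in> F"
  by (simp add: subfield_iff power_two_power_add)

lemma subfield_mult: "x \<in> F \<Longrightarrow> y \<in> F \<Longrightarrow> x * y \<in> F"
  by (simp add: subfield_iff power_mult_distrib)

lemma subfield_divide: "x \<in> F \<Longrightarrow> y \<in> F \<Longrightarrow> x / y \<in> F"
  by (simp add: subfield_iff power_divide)

lemma subfield_power_two_power: "x \<in> F \<Longrightarrow> x ^ 2 ^ i \<in> F"
  unfolding subfield_iff by (metis power_two_power_power_two_power add.commute)

lemma subfield_sum: "(\<And>i. i \<in> A \<Longrightarrow> f i \<in> F) \<Longrightarrow> sum f A \<in> F"
  by (simp add: subfield_iff power_two_power_sum)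

lemma add_subgroup_subfield: "add_subgroup F"
  by (simp add: add_subgroup_def subfield_add)

lemma subfield_power_q_power: "x \<in> F \<Longrightarrow> x ^ (2 ^ m) ^ j = x"
  by (induction j) (simp_all add: power_mult subfield_iff)

lemma card_subfield_le: "card F \<le> 2 ^ m"
proof -
  let ?P = "{x::'a. (\<Sum>i<Suc (Suc 0). 1 * x ^ (if i = 0 then 2 ^ m else 1)) = 0}"
  have "card ?P \<le> 2 ^ m"
    using one_less_q
    by (intro card_roots_sparse_poly_le[of _ _ 0]) (use m_pos in \<open>auto simp: inj_on_def\<close>)
  moreover have "?P = F"
    by (simp add: subfield_q_def char2_add_eq_0_iff[OF char_2])
  ultimately show ?thesis by simp
qed

lemma rel_trace_add: "Tr (x + y) = Tr x + Tr y"
  unfolding rel_trace_def by (simp add: q_power power_two_power_add sum.distrib)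

lemma rel_trace_zero [simp]: "Tr 0 = 0"
  unfolding rel_trace_def by (simp add: power_0_left)

lemma rel_trace_power_q: "Tr (x ^ 2 ^ m) = Tr x"
proof -
  have "Tr (x ^ 2 ^ m) = (\<Sum>j<n. x ^ (2 ^ m) ^ Suc j)"
    unfolding rel_trace_def by (simp add: power_mult[symmetric])
  also have "\<dots> = Tr x"
    unfolding rel_trace_def by (rule sum_lessThan_rotate) (simp add: power_q_power_n)
  finally show ?thesis .
qed

lemma rel_trace_in_subfield: "Tr x \<in> F"
proof -
  have "Tr x ^ 2 ^ m = Tr (x ^ 2 ^ m)"
    unfolding rel_trace_def power_two_power_sum
    by (simp add: power_mult[symmetric] mult.commute)
  then show ?thesis
    by (simp add: subfield_iff rel_trace_power_q)
qed

lemma rel_trace_power_q_power: "Tr (x ^ (2 ^ m) ^ k) = Tr x"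
proof (induction k)
  case (Suc k)
  have "x ^ (2 ^ m) ^ Suc k = (x ^ (2 ^ m) ^ k) ^ 2 ^ m"
    by (simp add: power_mult[symmetric] mult.commute)
  then show ?case
    using Suc rel_trace_power_q by simp
qed simp

lemma rel_trace_mult_subfield: "z \<in> F \<Longrightarrow> Tr (z * y) = z * Tr y"
  unfolding rel_trace_def by (simp add: power_mult_distrib subfield_power_q_power sum_distrib_left)

lemma rel_trace_subfield:
  assumes "z \<in> F"
  shows "Tr z = z"
proof -
  obtain k where "n = 2 * k + 1"
    using odd_n oddE by blast
  then have "(of_nat n :: 'a) = 1"
    by (simp add: T.two_eq_zero)
  then show ?thesis
    using assms unfolding rel_trace_def by (simp add: subfield_power_q_power)
qed

lemma abs_trace_eq_sum_rel_trace: "T w = (\<Sum>i<m. Tr w ^ 2 ^ i)"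
proof -
  have "T w = (\<Sum>k<n * m. w ^ 2 ^ k)"
    by (simp add: abs_trace_def mult.commute[of m n])
  also have "\<dots> = (\<Sum>j<n. \<Sum>k\<in>{j * m..<j * m + m}. w ^ 2 ^ k)"
    by (rule sum.nat_group[symmetric])
  also have "\<dots> = (\<Sum>j<n. \<Sum>i<m. w ^ 2 ^ (m * j + i))"
    by (simp add: sum.atLeastLessThan_shift_0 atLeast0LessThan ac_simps)
  also have "\<dots> = (\<Sum>i<m. Tr w ^ 2 ^ i)"
    unfolding rel_trace_def power_two_power_sum
    by (subst sum.swap) (simp add: q_power power_two_power_power_two_power)
  finally show ?thesis .
qed

lemma card_kernel_rel_trace_le: "card {x. Tr x = 0} \<le> (2 ^ m) ^ (n - 1)"
proof -
  have "card {x::'a. (\<Sum>j<n. 1 * x ^ (2 ^ m) ^ j) = 0} \<le> (2 ^ m) ^ (n - 1)"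
  proof (rule card_roots_sparse_poly_le[of _ _ 0])
    show "inj_on (\<lambda>j. ((2::nat) ^ m) ^ j) {..<n}"
      using one_less_q by (auto simp: inj_on_def power_inject_exp)
    show "0 < n"
      using odd_n by (simp add: odd_pos)
    show "((2::nat) ^ m) ^ j \<le> (2 ^ m) ^ (n - 1)" if "j < n" for j
      by (rule power_increasing) (use that in auto)
  qed simp
  then show ?thesis
    unfolding rel_trace_def by simp
qed

lemma range_rel_trace: "range Tr = F" and card_subfield: "card F = 2 ^ m"
proof -
  have "card (UNIV :: 'a set) = card (range Tr) * card {x. Tr x = 0}"
    using card_eq_card_image_mult_card_kernel[OF add_subgroup_UNIV, of Tr]
    by (simp add: additive_on_def rel_trace_add)
  moreover have "card (UNIV :: 'a set) = 2 ^ m * (2 ^ m) ^ (n - 1)"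
    using card odd_pos[OF odd_n] by (simp add: q_power[symmetric] power_Suc[symmetric])
  ultimately have "2 ^ m * (2 ^ m) ^ (n - 1) \<le> card (range Tr) * (2 ^ m) ^ (n - 1)"
    using card_kernel_rel_trace_le by (metis mult_le_mono2)
  then have ge: "2 ^ m \<le> card (range Tr)"
    by simp
  have sub: "range Tr \<subseteq> F"
    using rel_trace_in_subfield by auto
  then have le: "card (range Tr) \<le> card F"
    by (intro card_mono) auto
  show "card F = 2 ^ m"
    using ge le card_subfield_le by simp
  show "range Tr = F"
    using ge le card_subfield_le sub by (intro card_subset_eq) auto
qed

lemma nondegenerate_UNIV: "T.nondegenerate_on UNIV"
  using abs_trace_nonzero[OF card] by (auto intro: T.nondegenerate_onI)

lemma nondegenerate_subfield: "T.nondegenerate_on F"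
proof -
  obtain x where "T x \<noteq> 0"
    using abs_trace_nonzero[OF card] by blast
  moreover have "T (Tr x) = T x"
    by (simp add: abs_trace_eq_sum_rel_trace rel_trace_subfield rel_trace_in_subfield)
  ultimately show ?thesis
    by (intro T.nondegenerate_onI[of "Tr x"]) (simp_all add: rel_trace_in_subfield subfield_divide)
qed

lemma annihilator_subfield: "T.annihilator UNIV F = {x. Tr x = 0}"
proof -
  have "{x. Tr x = 0} \<subseteq> T.annihilator UNIV F"
  proof
    fix x assume x: "x \<in> {x. Tr x = 0}"
    have "T (x * u) = 0" if "u \<in> F" for u
    proof -
      have "Tr (x * u) = 0"
        using rel_trace_mult_subfield[OF that, of x] x by (simp add: mult.commute)
      then show ?thesis
        by (simp add: abs_trace_eq_sum_rel_trace power_0_left)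
    qed
    then show "x \<in> T.annihilator UNIV F"
      by (simp add: T.annihilator_def)
  qed
  moreover have "card F * card (T.annihilator UNIV F) = card (UNIV :: 'a set)"
    using T.card_mult_card_annihilator[OF add_subgroup_UNIV nondegenerate_UNIV add_subgroup_subfield]
    by simp
  moreover have "card (UNIV :: 'a set) = card F * card {x. Tr x = 0}"
    using card_eq_card_image_mult_card_kernel[OF add_subgroup_UNIV, of Tr]
    by (simp add: additive_on_def rel_trace_add range_rel_trace)
  moreover have "card F \<noteq> 0"
    by (simp add: card_subfield)
  ultimately show ?thesis
    by (intro card_subset_eq[symmetric]) auto
qed

lemma rel_trace_power_q_mult: "Tr (x ^ 2 ^ m * b) = Tr (x * b ^ (2 ^ m) ^ (n - 1))"
proof -
  have q_n: "2 ^ m * (2 ^ m) ^ (n - 1) = ((2::nat) ^ m) ^ n"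
    using odd_pos[OF odd_n] by (simp add: power_Suc[symmetric])
  have "Tr (x ^ 2 ^ m * b) = Tr ((x ^ 2 ^ m * b) ^ (2 ^ m) ^ (n - 1))"
    by (simp only: rel_trace_power_q_power)
  also have "(x ^ 2 ^ m * b) ^ (2 ^ m) ^ (n - 1) = x ^ (2 ^ m) ^ n * b ^ (2 ^ m) ^ (n - 1)"
    by (simp only: power_mult_distrib power_mult[of x "2 ^ m" "(2 ^ m) ^ (n - 1)", symmetric] q_n)
  finally show ?thesis
    by (simp only: power_q_power_n)
qed

text \<open>Since \<open>n\<close> is odd, \<open>b ^ q ^ (n - 1) = b ^ q\<close> forces \<open>b ^ q ^ 2 = b\<close> and then
  \<open>b ^ q = b\<close>.\<close>
lemma power_q_power_pred_ne_power_q: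
  assumes "b \<notin> F"
  shows "b ^ (2 ^ m) ^ (n - 1) \<noteq> b ^ 2 ^ m"
proof
  define q :: nat where "q = 2 ^ m"
  have b_qn: "b ^ q ^ n = b"
    unfolding q_def by (rule power_q_power_n)
  obtain k where n: "n = 2 * k + 1"
    using odd_n oddE by blast
  assume "b ^ (2 ^ m) ^ (n - 1) = b ^ 2 ^ m"
  then have eq: "b ^ q ^ (2 * k) = b ^ q"
    by (simp add: q_def n)
  have q_n: "q ^ n = q ^ (2 * k) * q"
    by (simp add: n)
  have "b ^ q ^ 2 = (b ^ q) ^ q"
    by (simp add: power2_eq_square power_mult)
  also have "\<dots> = (b ^ q ^ (2 * k)) ^ q"
    by (simp only: eq)
  also have "\<dots> = b ^ q ^ n"
    by (simp only: q_n power_mult)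
  finally have b_q2: "b ^ q ^ 2 = b"
    using b_qn by simp
  have "b ^ q ^ (2 * j) = b" for j
  proof (induction j)
    case (Suc j)
    have "q ^ (2 * Suc j) = q ^ (2 * j) * q\<^sup>2"
      by (simp add: power_add[symmetric])
    then show ?case
      using Suc b_q2 by (simp only: power_mult)
  qed simp
  then have "b ^ q = b"
    using eq by simp
  then show False
    using assms by (simp add: subfield_iff q_def)
qed

lemma range_rel_trace_mult: "c \<noteq> 0 \<Longrightarrow> range (\<lambda>x. Tr (x * c)) = F"
proof -
  assume "c \<noteq> 0"
  then have "range (\<lambda>x. x * c) = UNIV"
    by (metis UNIV_eq_I nonzero_eq_divide_eq rangeI)
  then have "range (\<lambda>x. Tr (x * c)) = range Tr"
    by (metis image_image)
  then show ?thesis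
    by (simp add: range_rel_trace)
qed

abbreviation L :: "'a \<Rightarrow> 'a" where "L \<equiv> Lpoly m n a"
abbreviation c :: "nat \<Rightarrow> 'a" where "c i \<equiv> qlin (2 ^ m) n (a i) 1"

lemma Lpoly_eq: "L x = (\<Sum>i<m. \<Sum>j<n. a i j * x ^ 2 ^ (i + m * j))"
  unfolding Lpoly_def qlin_def by (simp add: q_power power_two_power_power_two_power)

lemma Lpoly_add: "L (x + y) = L x + L y"
  by (simp add: Lpoly_eq power_two_power_add distrib_left sum.distrib)

lemma Lpoly_zero [simp]: "L 0 = 0"
  by (simp add: Lpoly_eq power_0_left)

lemma abs_trace_Lpoly: "T (y * L x) = T (Ladj m n a y * x)"
proof -
  have "T (y * L x) = (\<Sum>i<m. \<Sum>j<n. T ((a i j * y) * x ^ 2 ^ (i + m * j)))"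
    by (simp add: Lpoly_eq sum_distrib_left T.sum ac_simps)
  also have "\<dots> = (\<Sum>i<m. \<Sum>j<n. T ((a i j * y) ^ 2 ^ (m * n - (i + m * j)) * x))"
  proof (intro sum.cong refl)
    fix i j assume "i \<in> {..<m}" "j \<in> {..<n}"
    then have "m * Suc j \<le> m * n"
      by (intro mult_le_mono2) simp
    with \<open>i \<in> {..<m}\<close> have "i + m * j \<le> m * n"
      by simp
    then show "T ((a i j * y) * x ^ 2 ^ (i + m * j)) = T ((a i j * y) ^ 2 ^ (m * n - (i + m * j)) * x)"
      by (simp add: abs_trace_mult_power_shift[OF card] power_two_power_card[OF card])
  qed
  also have "\<dots> = T (Ladj m n a y * x)"
    unfolding Ladj_def by (simp add: sum_distrib_right T.sum)
  finally show ?thesis .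
qed

lemma Lpoly_subfield: "b \<in> F \<Longrightarrow> L b = (\<Sum>i<m. c i * b ^ 2 ^ i)"
  unfolding Lpoly_def qlin_def
  by (simp add: subfield_power_q_power subfield_power_two_power sum_distrib_right)

abbreviation f :: "'a \<Rightarrow> 'a" where "f x \<equiv> Tr (x ^ (2 ^ m + 1)) + L x"

lemma f_translate: "f (x + b) = f x + (Tr (x ^ 2 ^ m * b) + Tr (x * b ^ 2 ^ m) + f b)"
proof -
  have power_q_Suc: "y ^ (2 ^ m + 1) = y ^ 2 ^ m * y" for y :: 'a
    by (simp only: power_add power_one_right)
  have "(x + b) ^ (2 ^ m + 1) = x ^ (2 ^ m + 1) + x ^ 2 ^ m * b + x * b ^ 2 ^ m + b ^ (2 ^ m + 1)"
    unfolding power_q_Suc power_two_power_add by (simp add: algebra_simps)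
  then have "Tr ((x + b) ^ (2 ^ m + 1))
      = Tr (x ^ (2 ^ m + 1)) + Tr (x ^ 2 ^ m * b) + Tr (x * b ^ 2 ^ m) + Tr (b ^ (2 ^ m + 1))"
    by (simp only: rel_trace_add)
  then show ?thesis
    by (simp only: Lpoly_add ac_simps)
qed

lemma f_translate_subfield:
  assumes "b \<in> F"
  shows "f (x + b) = f x + (b\<^sup>2 + L b)"
proof -
  have "Tr (x ^ 2 ^ m * b) = Tr (b * x ^ 2 ^ m)"
    by (simp only: mult.commute)
  also have "\<dots> = b * Tr x"
    by (simp add: rel_trace_mult_subfield[OF assms] rel_trace_power_q)
  finally have 1: "Tr (x ^ 2 ^ m * b) = b * Tr x" .
  have "Tr (x * b ^ 2 ^ m) = Tr (b * x)"
    using assms by (simp add: subfield_iff mult.commute)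
  also have "\<dots> = b * Tr x"
    by (rule rel_trace_mult_subfield[OF assms])
  finally have 2: "Tr (x * b ^ 2 ^ m) = b * Tr x" .
  have "Tr (b ^ (2 ^ m + 1)) = Tr (b * b)"
    using assms by (simp add: subfield_iff)
  also have "\<dots> = b\<^sup>2"
    by (simp add: rel_trace_subfield subfield_mult assms power2_eq_square)
  finally have 3: "Tr (b ^ (2 ^ m + 1)) = b\<^sup>2" .
  show ?thesis
    by (simp only: f_translate 1 2 3 char2_simps add_0)
qed

lemma f_translate_not_subfield:
  assumes "b \<notin> F"
  obtains c where "c \<noteq> 0" "\<And>x. f (x + b) = f x + (Tr (x * c) + f b)"
proof
  show "b ^ (2 ^ m) ^ (n - 1) + b ^ 2 ^ m \<noteq> 0"
    using power_q_power_pred_ne_power_q[OF assms] char2_add_eq_0_iff[OF char_2] by blast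
  show "f (x + b) = f x + (Tr (x * (b ^ (2 ^ m) ^ (n - 1) + b ^ 2 ^ m)) + f b)" for x
    by (simp only: f_translate rel_trace_power_q_mult distrib_left rel_trace_add)
qed

lemma f_in_subfield_iff: "f b \<in> F \<longleftrightarrow> L b \<in> F"
proof
  assume "f b \<in> F"
  moreover have "L b = Tr (b ^ (2 ^ m + 1)) + f b"
    by (simp only: add.assoc[symmetric] char2_simps add_0)
  ultimately show "L b \<in> F"
    by (metis subfield_add rel_trace_in_subfield)
qed (intro subfield_add rel_trace_in_subfield)

lemma f_translate_ne_iff_subfield:
  assumes "b \<in> F"
  shows "(\<forall>x. f (x + b) \<noteq> f x) \<longleftrightarrow> b\<^sup>2 + L b \<noteq> 0"
  by (simp only: f_translate_subfield[OF assms] add_cancel_left_right simp_thms)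

lemma f_translate_ne_iff_not_subfield:
  assumes "b \<notin> F"
  shows "(\<forall>x. f (x + b) \<noteq> f x) \<longleftrightarrow> L b \<notin> F"
proof -
  obtain c where c: "c \<noteq> 0" "\<And>x. f (x + b) = f x + (Tr (x * c) + f b)"
    using f_translate_not_subfield[OF assms] by blast
  have "f (x + b) \<noteq> f x \<longleftrightarrow> f b \<noteq> Tr (x * c)" for x
    by (metis c(2) add_cancel_left_right char2_add_eq_0_iff[OF char_2])
  then have "(\<forall>x. f (x + b) \<noteq> f x) \<longleftrightarrow> f b \<notin> range (\<lambda>x. Tr (x * c))"
    unfolding image_iff by blast
  also have "\<dots> \<longleftrightarrow> L b \<notin> F"
    by (simp only: range_rel_trace_mult[OF c(1)] f_in_subfield_iff)
  finally show ?thesis .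
qed

lemma bij_f_iff:
  "bij f \<longleftrightarrow> (\<forall>b\<in>F. b \<noteq> 0 \<longrightarrow> b\<^sup>2 + L b \<noteq> 0) \<and> (\<forall>b. L b \<in> F \<longrightarrow> b \<in> F)"
proof -
  have "(b \<noteq> 0 \<longrightarrow> (\<forall>x. f (x + b) \<noteq> f x))
      \<longleftrightarrow> (b \<in> F \<longrightarrow> b \<noteq> 0 \<longrightarrow> b\<^sup>2 + L b \<noteq> 0) \<and> (L b \<in> F \<longrightarrow> b \<in> F)" for b
    using f_translate_ne_iff_subfield[of b] f_translate_ne_iff_not_subfield[of b] subfield_zero
    by (cases "b \<in> F") blast+
  then show ?thesis
    unfolding bij_iff_translation_changes_value by blast
qed

lemma add_subgroup_range_Lpoly: "add_subgroup (range L)"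
  by (rule add_subgroup_image[OF add_subgroup_UNIV]) (simp add: additive_on_def Lpoly_add)

lemma card_preimage_subfield:
  "card {b. L b \<in> F} * card (range L + F) = card (UNIV :: 'a set) * card F"
proof -
  let ?S = "{b. L b \<in> F}"
  have "add_subgroup ?S"
    by (simp add: add_subgroup_def Lpoly_add subfield_add)
  then have "card ?S = card (L ` ?S) * card {x \<in> ?S. L x = 0}"
    by (rule card_eq_card_image_mult_card_kernel) (simp_all add: additive_on_def Lpoly_add)
  also have "L ` ?S = range L \<inter> F"
    by auto
  also have "{x \<in> ?S. L x = 0} = {x. L x = 0}"
    by auto
  finally have "card ?S * card (range L + F)
      = card (range L \<inter> F) * card (range L + F) * card {x. L x = 0}"
    by simp
  also have "\<dots> = card (range L) * card {x. L x = 0} * card F"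
    by (simp add: card_inter_mult_card_set_plus add_subgroup_range_Lpoly add_subgroup_subfield)
  also have "card (range L) * card {x. L x = 0} = card (UNIV :: 'a set)"
    using card_eq_card_image_mult_card_kernel[OF add_subgroup_UNIV, of L]
    by (simp add: additive_on_def Lpoly_add)
  finally show ?thesis .
qed

lemma card_subfield_le_card_preimage_subfield: "card F \<le> card {b. L b \<in> F}"
proof -
  have "card (range L + F) \<le> card (UNIV :: 'a set)"
    by (rule card_mono) simp_all
  then have "card (UNIV :: 'a set) * card F \<le> card (UNIV :: 'a set) * card {b. L b \<in> F}"
    using card_preimage_subfield by (metis mult.commute mult_le_mono2)
  then show ?thesis
    by (simp add: finite_UNIV_card_ge_0)
qed

lemma annihilator_range_Lpoly_plus_subfield:
  "T.annihilator UNIV (range L + F) = {x. Tr x = 0} \<inter> {x. Ladj m n a x = 0}"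
proof (intro set_eqI iffI)
  fix y assume y: "y \<in> T.annihilator UNIV (range L + F)"
  have "T (x * Ladj m n a y) = 0" for x
  proof -
    have "L x + 0 \<in> range L + F"
      by (intro set_plus_intro) simp_all
    then have "T (y * L x) = 0"
      using y by (simp add: T.annihilator_def)
    then show ?thesis
      using abs_trace_Lpoly[of y x] by (metis mult.commute)
  qed
  then have "Ladj m n a y = 0"
    using nondegenerate_UNIV unfolding T.nondegenerate_on_def by blast
  moreover have "y \<in> T.annihilator UNIV F"
  proof -
    have "0 \<in> range L"
      by (metis Lpoly_zero rangeI)
    then have "0 + w \<in> range L + F" if "w \<in> F" for w
      using that by (intro set_plus_intro)
    then show ?thesis
      using y by (simp add: T.annihilator_def)
  qed
  ultimately show "y \<in> {x. Tr x = 0} \<inter> {x. Ladj m n a x = 0}"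
    by (simp add: annihilator_subfield)
next
  fix y assume y: "y \<in> {x. Tr x = 0} \<inter> {x. Ladj m n a x = 0}"
  have "T (y * z) = 0" if "z \<in> range L + F" for z
  proof -
    obtain x w where z: "z = L x + w" "w \<in> F"
      using \<open>z \<in> range L + F\<close> by (auto elim: set_plus_elim)
    have "T (y * w) = 0"
      using y z(2) by (simp add: annihilator_subfield[symmetric] T.annihilator_def)
    moreover have "T (y * L x) = 0"
      using y by (simp add: abs_trace_Lpoly)
    ultimately show ?thesis
      by (simp add: z(1) distrib_left T.add)
  qed
  then show "y \<in> T.annihilator UNIV (range L + F)"
    by (simp add: T.annihilator_def)
qed

lemma kernel_trivial_iff_card_preimage_subfield:
  "{x. Tr x = 0} \<inter> {x. Ladj m n a x = 0} = {0} \<longleftrightarrow> card {b. L b \<in> F} = card F"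
proof -
  let ?K = "{x. Tr x = 0} \<inter> {x. Ladj m n a x = 0}" and ?N = "card (UNIV :: 'a set)"
  have K: "card (range L + F) * card ?K = ?N"
    using T.card_mult_card_annihilator[OF add_subgroup_UNIV nondegenerate_UNIV
        add_subgroup_set_plus[OF add_subgroup_range_Lpoly add_subgroup_subfield]]
    by (simp add: annihilator_range_Lpoly_plus_subfield)
  have S: "card {b. L b \<in> F} * card (range L + F) = ?N * card F"
    by (rule card_preimage_subfield)
  have "?N \<noteq> 0" "card F \<noteq> 0"
    by (simp_all add: card_subfield)
  have "?K = {0} \<longleftrightarrow> card ?K = 1"
    by (rule eq_singleton_iff_card_eq_1) (simp add: Ladj_def power_0_left)
  also have "\<dots> \<longleftrightarrow> card (range L + F) = ?N"
  proof
    assume "card (range L + F) = ?N"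
    then have "?N * card ?K = ?N * 1"
      using K by simp
    then show "card ?K = 1"
      using \<open>?N \<noteq> 0\<close> by simp
  qed (use K in simp)
  also have "\<dots> \<longleftrightarrow> card {b. L b \<in> F} = card F"
  proof
    assume "card (range L + F) = ?N"
    then have "?N * card {b. L b \<in> F} = ?N * card F"
      using S by (simp add: ac_simps)
    then show "card {b. L b \<in> F} = card F"
      using \<open>?N \<noteq> 0\<close> by simp
  next
    assume "card {b. L b \<in> F} = card F"
    then have "card F * card (range L + F) = card F * ?N"
      using S by (simp add: ac_simps)
    then show "card (range L + F) = ?N"
      using \<open>card F \<noteq> 0\<close> by simp
  qed
  finally show ?thesis .
qed

lemma Lpoly_maps_subfield: "\<forall>i<m. c i \<in> F \<Longrightarrow> b \<in> F \<Longrightarrow> L b \<in> F"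
  by (auto simp: Lpoly_subfield intro!: subfield_sum subfield_mult subfield_power_two_power)

text \<open>Every \<open>b \<in> F\<close> is a root of \<open>\<Sum>i<m. (c i ^ q + c i) * x ^ 2 ^ i\<close>, whose degree is less
  than \<open>q = card F\<close>.\<close>
lemma coeffs_in_subfield_if_Lpoly_maps_subfield:
  assumes maps: "\<forall>b\<in>F. L b \<in> F"
  shows "\<forall>i<m. c i \<in> F"
proof (rule ccontr)
  assume "\<not> (\<forall>i<m. c i \<in> F)"
  then obtain i0 where i0: "i0 < m" "c i0 \<notin> F"
    by blast
  define d where "d i = c i ^ 2 ^ m + c i" for i
  have "F \<subseteq> {x. (\<Sum>i<m. d i * x ^ 2 ^ i) = 0}"
  proof
    fix b assume b: "b \<in> F"
    have "(\<Sum>i<m. c i * b ^ 2 ^ i) ^ 2 ^ m = (\<Sum>i<m. c i ^ 2 ^ m * b ^ 2 ^ i)"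
      unfolding power_two_power_sum
      using subfield_power_two_power[OF b] by (simp add: power_mult_distrib subfield_iff)
    moreover have "(\<Sum>i<m. c i * b ^ 2 ^ i) ^ 2 ^ m = (\<Sum>i<m. c i * b ^ 2 ^ i)"
      using maps b by (simp add: Lpoly_subfield[OF b, symmetric] subfield_iff)
    ultimately show "b \<in> {x. (\<Sum>i<m. d i * x ^ 2 ^ i) = 0}"
      by (simp add: d_def distrib_right sum.distrib)
  qed
  then have "card F \<le> card {x. (\<Sum>i<m. d i * x ^ 2 ^ i) = 0}"
    by (intro card_mono) simp_all
  also have "\<dots> \<le> 2 ^ (m - 1)"
  proof (rule card_roots_sparse_poly_le[of _ _ i0])
    show "d i0 \<noteq> 0"
      using i0 by (simp add: d_def subfield_iff char2_add_eq_0_iff[OF char_2])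
    show "(2::nat) ^ i \<le> 2 ^ (m - 1)" if "i < m" for i
      by (rule power_increasing) (use that in auto)
  qed (auto simp: inj_on_def i0)
  also have "\<dots> < card F"
    using m_pos by (simp add: card_subfield)
  finally show False
    by simp
qed

text \<open>\<open>l\<close> is the polynomial \<open>\<ell>\<close> of the statement, the adjoint of \<open>g\<close> on \<open>F\<close>.\<close>
abbreviation g :: "'a \<Rightarrow> 'a" where "g x \<equiv> x\<^sup>2 + L x"
abbreviation l :: "'a \<Rightarrow> 'a" where "l y \<equiv> (\<Sum>i<m. (c i * y) ^ 2 ^ (m - i)) + y ^ 2 ^ (m - 1)"

lemma additive_on_g: "additive_on F g"
  by (simp add: additive_on_def power_two_power_add[of _ _ 1, simplified] Lpoly_add ac_simps)

lemma additive_on_l: "additive_on F l"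
  by (simp add: additive_on_def distrib_left distrib_right power_mult_distrib power_two_power_add
      sum.distrib ac_simps)

lemma inj_on_g_iff: "inj_on g F \<longleftrightarrow> (\<forall>b\<in>F. b \<noteq> 0 \<longrightarrow> b\<^sup>2 + L b \<noteq> 0)"
  by (auto simp: additive_inj_on_iff[OF add_subgroup_subfield additive_on_g])

lemma abs_trace_g_eq_abs_trace_l: "x \<in> F \<Longrightarrow> T (y * g x) = T (l y * x)"
proof -
  assume x: "x \<in> F"
  have shift: "T (w * x ^ 2 ^ e) = T (w ^ 2 ^ (m - e) * x)" if "e \<le> m" for w e
    using abs_trace_mult_power_shift[OF card _ that] x by (simp add: subfield_iff)
  have "T (y * g x) = T (y * x\<^sup>2) + (\<Sum>i<m. T (y * (c i * x ^ 2 ^ i)))"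
    by (simp add: Lpoly_subfield[OF x] distrib_left sum_distrib_left T.add T.sum)
  also have "T (y * x\<^sup>2) = T (y ^ 2 ^ (m - 1) * x)"
    using shift[of 1 y] m_pos by simp
  also have "(\<Sum>i<m. T (y * (c i * x ^ 2 ^ i))) = (\<Sum>i<m. T ((c i * y) ^ 2 ^ (m - i) * x))"
  proof (rule sum.cong[OF refl])
    fix i assume "i \<in> {..<m}"
    then have "T ((c i * y) * x ^ 2 ^ i) = T ((c i * y) ^ 2 ^ (m - i) * x)"
      by (intro shift) simp
    then show "T (y * (c i * x ^ 2 ^ i)) = T ((c i * y) ^ 2 ^ (m - i) * x)"
      by (simp add: ac_simps)
  qed
  also have "T (y ^ 2 ^ (m - 1) * x) + (\<Sum>i<m. T ((c i * y) ^ 2 ^ (m - i) * x)) = T (l y * x)"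
    by (simp add: distrib_right sum_distrib_right T.add T.sum add.commute)
  finally show ?thesis .
qed

lemma inj_on_g_iff_inj_on_l:
  assumes coeffs: "\<forall>i<m. c i \<in> F"
  shows "inj_on g F \<longleftrightarrow> inj_on l F"
proof -
  have "card {x \<in> F. g x = 0} = card {y \<in> F. l y = 0}"
  proof (rule T.card_kernel_eq_card_kernel_adjoint
      [OF add_subgroup_subfield nondegenerate_subfield additive_on_g])
    show "g x \<in> F" if "x \<in> F" for x
      using that coeffs by (intro subfield_add Lpoly_maps_subfield)
        (simp_all add: power2_eq_square subfield_mult)
    show "l y \<in> F" if "y \<in> F" for y
      using that coeffs by (intro subfield_add subfield_sum subfield_power_two_power subfield_mult) auto
  qed (rule abs_trace_g_eq_abs_trace_l)
  moreover have "inj_on g F \<longleftrightarrow> card {x \<in> F. g x = 0} = 1"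
    unfolding additive_inj_on_iff[OF add_subgroup_subfield additive_on_g]
    by (rule eq_singleton_iff_card_eq_1) (simp add: power_0_left)
  moreover have "inj_on l F \<longleftrightarrow> card {y \<in> F. l y = 0} = 1"
    unfolding additive_inj_on_iff[OF add_subgroup_subfield additive_on_l]
    by (rule eq_singleton_iff_card_eq_1) (use m_pos in \<open>simp add: power_0_left\<close>)
  ultimately show ?thesis
    by (simp only:)
qed

lemma bij_betw_l_iff:
  assumes "\<forall>i<m. c i \<in> F"
  shows "bij_betw l F F \<longleftrightarrow> inj_on l F"
proof -
  have "l ` F \<subseteq> F"
    using assms by (auto intro!: subfield_add subfield_sum subfield_power_two_power subfield_mult)
  then show ?thesis
    unfolding bij_betw_def using endo_inj_surj[of F l] by auto
qed

theorem bij_f_iff_conditions: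
  "bij f \<longleftrightarrow> (\<forall>i<m. c i \<in> F) \<and> bij_betw l F F \<and> {x. Tr x = 0} \<inter> {x. Ladj m n a x = 0} = {0}"
  (is "_ \<longleftrightarrow> ?coeffs \<and> ?l \<and> ?kernel")
proof
  assume "bij f"
  then have "\<forall>b\<in>F. b \<noteq> 0 \<longrightarrow> b\<^sup>2 + L b \<noteq> 0" and preimage: "{b. L b \<in> F} \<subseteq> F"
    unfolding bij_f_iff by blast+
  then have g: "inj_on g F"
    by (simp only: inj_on_g_iff)
  have "{b. L b \<in> F} = F"
    using preimage card_subfield_le_card_preimage_subfield by (intro card_seteq) simp_all
  then have coeffs: ?coeffs
    by (intro coeffs_in_subfield_if_Lpoly_maps_subfield) blast
  moreover have ?l
    using g by (simp only: bij_betw_l_iff[OF coeffs] inj_on_g_iff_inj_on_l[OF coeffs])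
  moreover have ?kernel
    using \<open>{b. L b \<in> F} = F\<close> by (simp only: kernel_trivial_iff_card_preimage_subfield)
  ultimately show "?coeffs \<and> ?l \<and> ?kernel"
    by blast
next
  assume "?coeffs \<and> ?l \<and> ?kernel"
  then have coeffs: ?coeffs and l: ?l and card_eq: "card {b. L b \<in> F} = card F"
    by (simp_all add: kernel_trivial_iff_card_preimage_subfield)
  have "F \<subseteq> {b. L b \<in> F}"
    using Lpoly_maps_subfield[OF coeffs] by blast
  then have "{b. L b \<in> F} = F"
    using card_eq by (intro card_subset_eq[symmetric]) simp_all
  moreover have "inj_on g F"
    using l by (simp only: bij_betw_l_iff[OF coeffs] inj_on_g_iff_inj_on_l[OF coeffs])
  ultimately show "bij f"
    unfolding bij_f_iff inj_on_g_iff[symmetric] by blast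
qed

end

theorem mainTheorem1:
  fixes m n :: nat
    and a :: "nat \<Rightarrow> nat \<Rightarrow> 'a::{finite, field}"
  assumes "m \<ge> 1" and "odd n" and "card (UNIV :: 'a set) = 2 ^ (m * n)"
  shows "bij (\<lambda>x::'a. rel_trace (2 ^ m) n (x ^ (2 ^ m + 1)) + Lpoly m n a x)
     \<longleftrightarrow> (\<forall>i<m. qlin (2 ^ m) n (a i) 1 \<in> subfield_q (2 ^ m))
       \<and> bij_betw (\<lambda>x. (\<Sum>i<m. (qlin (2 ^ m) n (a i) 1 * x) ^ (2 ^ (m - i))) + x ^ (2 ^ (m - 1)))
            (subfield_q (2 ^ m)) (subfield_q (2 ^ m))
       \<and> {x. rel_trace (2 ^ m) n x = 0} \<inter> {x. Ladj m n a x = 0} = {0}"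
proof -
  interpret binary_odd_extension m n a
    using assms by unfold_locales
  show ?thesis
    by (rule bij_f_iff_conditions)
qed

end
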